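(* Let $P$ be a planar point set of $n$ points in general position and $k=|\mathrm{ch}(P)|$. For every quadrangle tree $\mathcal{Q}$ for $P$, \[ V_{\max}(P)\le|\mathrm{OD}(P,\mathcal{Q})|\cdot 3^n\cdot n^k. \]
   Context: General position: no duplicates, no three collinear. $\mathrm{CH}(P)$ is the convex hull, $\mathrm{ch}(P)$ the points of $P$ on its boundary. $\mathbb{I}_P$ is the set of arrays $I_P$ of length $n$ (indices $1,\dots,n$) storing the points of $P$. A witness list of $I_P$ is $W=(a_i,b_i,c_i)_{i=1}^n\in\mathbb{Z}^{n\times3}$ with $a_i=b_i=c_i=-1$ if $I_P[i]\in\mathrm{ch}(P)$ and otherwise $I_P[i]$ in the interior of triangle $(I_P[a_i],I_P[b_i],I_P[c_i])$. $V(P,W)=\{I_P\in\mathbb{I}_P: W\text{ is a witness list of }I_P\}$ and $V_{\max}(P)=\max_{W\in\mathbb{Z}^{n\times3}}|V(P,W)|$. A rooted convex polygon $(C,p,q)$ is a convex polygon with a chosen edge $pq$; for distinct vertices $r,s$ of $C$, $C^{rs}$ is the piece of $C$ cut by line $rs$ not containing $pq$. A quadrangle tree of $(C,p,q)$ is a binary tree whose nodes store quadrangles spanned by (up to) four vertices of $C$: the root stores $p,q,s,r$ where $rs$ is an edge of $C$ (allowing $p=r$ and/or $q=s$); if $p\ne r$ the root has a child whose subtree is a quadrangle tree of $(C^{pr},p,r)$; if $q\ne s$ the root has a child whose subtree is a quadrangle tree of $(C^{qs},q,s)$. Each node's rooted edge is the chosen edge of its rooted polygon. A quadrangle tree for $P$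 is a quadrangle tree of $(\mathrm{CH}(P),p,q)$ for an edge $pq$ of $\mathrm{CH}(P)$. The population of a node is the set of points of $P$ on or inside its quadrangle except those on the line of its rooted edge; $r(x)$ denotes the node whose population contains $x$. Partial order: $x\prec_{\mathcal{Q}}y$ if $r(x)$ is a strict ancestor of $r(y)$, or $r(x)=r(y)$ and $y$ lies deeper than $x$ inside the halfplane bounded by the rooted-edge line of $r(x)$ containing its quadrangle. A downdraft is a map $\varphi:P-\mathrm{ch}(P)\to P$ with $x\prec_{\mathcal{Q}}\varphi(x)$ for all $x$; an ordered downdraft is a downdraft plus a total order on each fiber $\varphi^{-1}(\{y\})$; $\mathrm{OD}(P,\mathcal{Q})$ is the set of ordered downdrafts. *)

theory Defs
  imports "HOL-Analysis.Analysis" "HOL-Library.Tree"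
begin

type_synonym pt = "real ^ 2"

definition general_position :: "pt set \<Rightarrow> bool" where
  "general_position P \<longleftrightarrow>
     (\<forall>a\<in>P. \<forall>b\<in>P. \<forall>c\<in>P. distinct [a, b, c] \<longrightarrow> \<not> collinear {a, b, c})"

definition ch :: "pt set \<Rightarrow> pt set" where
  "ch P = P \<inter> frontier (convex hull P)"

definition arrays :: "pt set \<Rightarrow> (nat \<Rightarrow> pt) set" where
  "arrays P = {I \<in> {1..card P} \<rightarrow>\<^sub>E P. bij_betw I {1..card P} P}"

definition witness_lists :: "nat \<Rightarrow> (nat \<Rightarrow> int \<times> int \<times> int) set" where
  "witness_lists n = {1..n} \<rightarrow>\<^sub>E UNIV"

definition is_witness_list :: "pt set \<Rightarrow> (nat \<Rightarrow> int \<times> int \<times> int) \<Rightarrow> (nat \<Rightarrow> pt) \<Rightarrow> bool" where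
  "is_witness_list P W I \<longleftrightarrow>
     (\<forall>i\<in>{1..card P}.
        (case W i of (a, b, c) \<Rightarrow>
           (if I i \<in> ch P then a = -1 \<and> b = -1 \<and> c = -1
            else a \<in> {1..int (card P)} \<and> b \<in> {1..int (card P)} \<and> c \<in> {1..int (card P)} \<and>
                 I i \<in> interior (convex hull {I (nat a), I (nat b), I (nat c)}))))"

definition V :: "pt set \<Rightarrow> (nat \<Rightarrow> int \<times> int \<times> int) \<Rightarrow> (nat \<Rightarrow> pt) set" where
  "V P W = {I \<in> arrays P. is_witness_list P W I}"

definition Vmax :: "pt set \<Rightarrow> nat" where
  "Vmax P = Max ((\<lambda>W. card (V P W)) ` witness_lists (card P))"

definition hull_edge :: "pt set \<Rightarrow> pt \<Rightarrow> pt \<Rightarrow> bool" where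
  "hull_edge P a b \<longleftrightarrow> a \<noteq> b \<and> closed_segment a b face_of convex hull P"

text \<open>A list c = [c_0,...,c_m] enumerating ch(P) in boundary order of CH(P):
  all cyclically consecutive pairs are edges of CH(P). The closing edge c_m c_0
  is the root edge pq of the quadrangle tree.\<close>
definition hull_order :: "pt set \<Rightarrow> pt list \<Rightarrow> bool" where
  "hull_order P c \<longleftrightarrow> distinct c \<and> set c = ch P \<and> length c \<ge> 2 \<and>
     (\<forall>i<length c. hull_edge P (c ! i) (c ! ((i + 1) mod length c)))"

text \<open>Quadrangle trees of the rooted convex polygon spanned by the chain
  c_i, c_(i+1), ..., c_j with rooted edge c_i c_j. A node labelled (i,t,j) stores
  the quadrangle c_i, c_j, c_(t+1), c_t, where c_t c_(t+1) is an edge of the polygon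
  (c_t = c_i and/or c_(t+1) = c_j allowed).\<close>
inductive qtree_on :: "nat \<Rightarrow> nat \<Rightarrow> (nat \<times> nat \<times> nat) tree \<Rightarrow> bool" where
  "\<lbrakk> i \<le> t; t < j;
     (t = i \<and> l = Leaf) \<or> (t \<noteq> i \<and> qtree_on i t l);
     (t + 1 = j \<and> r = Leaf) \<or> (t + 1 \<noteq> j \<and> qtree_on (t + 1) j r) \<rbrakk>
   \<Longrightarrow> qtree_on i j (Node l (i, t, j) r)"

definition quadrangle_tree_for :: "pt set \<Rightarrow> pt list \<Rightarrow> (nat \<times> nat \<times> nat) tree \<Rightarrow> bool" where
  "quadrangle_tree_for P c T \<longleftrightarrow> hull_order P c \<and> qtree_on 0 (length c - 1) T"

definition quad :: "pt list \<Rightarrow> nat \<times> nat \<times> nat \<Rightarrow> pt set" where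
  "quad c N = (case N of (i, t, j) \<Rightarrow> convex hull {c ! i, c ! t, c ! (t + 1), c ! j})"

definition rline :: "pt list \<Rightarrow> nat \<times> nat \<times> nat \<Rightarrow> pt set" where
  "rline c N = (case N of (i, t, j) \<Rightarrow> affine hull {c ! i, c ! j})"

definition population :: "pt set \<Rightarrow> pt list \<Rightarrow> nat \<times> nat \<times> nat \<Rightarrow> pt set" where
  "population P c N = {x \<in> P. x \<in> quad c N \<and> x \<notin> rline c N}"

fun anc_pairs :: "'a tree \<Rightarrow> ('a \<times> 'a) set" where
  "anc_pairs Leaf = {}"
| "anc_pairs (Node l a r) = {a} \<times> (set_tree l \<union> set_tree r) \<union> anc_pairs l \<union> anc_pairs r"

definition qprec :: "pt set \<Rightarrow> pt list \<Rightarrow> (nat \<times> nat \<times> nat) tree \<Rightarrow> pt \<Rightarrow> pt \<Rightarrow> bool" where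
  "qprec P c T x y \<longleftrightarrow>
     (\<exists>Nx\<in>set_tree T. \<exists>Ny\<in>set_tree T.
        x \<in> population P c Nx \<and> y \<in> population P c Ny \<and>
        ((Nx, Ny) \<in> anc_pairs T \<or>
         (Nx = Ny \<and> infdist x (rline c Nx) < infdist y (rline c Nx))))"

definition downdrafts :: "pt set \<Rightarrow> pt list \<Rightarrow> (nat \<times> nat \<times> nat) tree \<Rightarrow> (pt \<Rightarrow> pt) set" where
  "downdrafts P c T =
     {\<phi> \<in> (P - ch P) \<rightarrow>\<^sub>E P. \<forall>x\<in>P - ch P. qprec P c T x (\<phi> x)}"

definition fiber :: "pt set \<Rightarrow> (pt \<Rightarrow> pt) \<Rightarrow> pt \<Rightarrow> pt set" where
  "fiber P \<phi> y = {x \<in> P - ch P. \<phi> x = y}"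

definition OD :: "pt set \<Rightarrow> pt list \<Rightarrow> (nat \<times> nat \<times> nat) tree \<Rightarrow> ((pt \<Rightarrow> pt) \<times> (pt \<Rightarrow> pt rel)) set" where
  "OD P c T =
     {(\<phi>, \<omega>). \<phi> \<in> downdrafts P c T \<and>
        \<omega> \<in> (\<Pi>\<^sub>E y\<in>P. {r. r \<subseteq> fiber P \<phi> y \<times> fiber P \<phi> y \<and> linear_order_on (fiber P \<phi> y) r})}"

end

theory Submission
  imports Defs
begin

(*
  Each array I in V(P,W) is encoded injectively by an ordered downdraft, a digit in {0,1,2}
  for every index, and the indices of the hull points.  Let x = I[i] be an interior point.
  Among the nodes whose population contains x strictly above the rooted edge, take a narrowest
  one, N.  Since x is interior to its witness triangle, some vertex v of that triangle lies
  strictly farther above the rooted edge of N than x; v then lies in the population of N or of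
  a descendant of N.  Hence x \<prec>_Q v, and v is smaller than x in a ranking \<mu> of P that does
  not depend on I.  The digit records which vertex is taken as \<phi>(x) = v, and every fiber of \<phi>
  is ordered by index.  Conversely, I is recovered by induction along \<mu>: once the index of
  \<phi>(x) is known, W and the digits determine the index set of the fiber of \<phi>(x), and the fiber
  order locates the index of x in it.
*)

section \<open>Orientation in the plane\<close>

(* Twice the signed area of the triangle a b y: positive iff y lies to the left of the directed
   line from a to b. *)
definition orient :: "pt \<Rightarrow> pt \<Rightarrow> pt \<Rightarrow> real" where
  "orient a b y = (b$1 - a$1) * (y$2 - a$2) - (b$2 - a$2) * (y$1 - a$1)"

definition normal :: "pt \<Rightarrow> pt \<Rightarrow> pt" where
  "normal a b = vector [a$2 - b$2, b$1 - a$1]"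

lemma pt_eq_iff: "(x::pt) = y \<longleftrightarrow> x$1 = y$1 \<and> x$2 = y$2"
  by (simp add: vec_eq_iff forall_2)

lemma inner_pt: "inner (x::pt) y = x$1 * y$1 + x$2 * y$2"
  by (simp add: inner_vec_def sum_2)

lemma norm_pt: "norm (x::pt) = sqrt ((x$1)\<^sup>2 + (x$2)\<^sup>2)"
  by (simp add: norm_vec_def L2_set_def sum_2)

lemma orient_swap: "orient b a y = - orient a b y"
  unfolding orient_def by (simp add: algebra_simps)

lemma orient_rotate: "orient a b c = orient b c a"
  unfolding orient_def by (simp add: algebra_simps)

lemma orient_add_cycle: "orient a b y + orient b c y + orient c a y = orient a b c"
  unfolding orient_def by (simp add: algebra_simps)

lemma orient_swap_sign: "0 \<le> s * orient a b y \<or> 0 < s * orient b a y"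
  unfolding orient_swap[of b a] by linarith

lemma orient_eq_inner_normal: "orient a b y = normal a b \<bullet> y - normal a b \<bullet> a"
  unfolding orient_def normal_def inner_pt by (simp add: algebra_simps)

lemma norm_normal: "norm (normal a b) = dist a b"
  unfolding normal_def dist_norm norm_pt by (simp add: power2_commute)

lemma normal_eq_0_iff: "normal a b = 0 \<longleftrightarrow> a = b"
  by (metis dist_eq_0_iff norm_eq_zero norm_normal)

lemma orient_eq_0_if_in_affine_hull:
  assumes "y \<in> affine hull {a, b}"
  shows "orient a b y = 0"
proof -
  obtain u v where uv: "y = u *\<^sub>R a + v *\<^sub>R b" "u + v = 1"
    using assms unfolding affine_hull_2 by blast
  have u: "u = 1 - v" using uv(2) by simp
  have d: "y$k - a$k = v * (b$k - a$k)" for k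
    unfolding uv(1) u by (simp add: algebra_simps)
  show ?thesis
    unfolding orient_def d by (simp add: algebra_simps)
qed

lemma in_affine_hull_if_orient_eq_0:
  assumes "a \<noteq> b" "orient a b y = 0"
  shows "y \<in> affine hull {a, b}"
proof -
  define w where "w = b - a"
  define z where "z = y - a"
  have w: "w \<bullet> w \<noteq> 0" using assms(1) unfolding w_def by simp
  have o: "w$1 * z$2 = w$2 * z$1" using assms(2) unfolding orient_def w_def z_def by simp
  define t where "t = (z \<bullet> w) / (w \<bullet> w)"
  \<comment> \<open>in the plane, z is orthogonal to the normal of w, hence a multiple of w\<close>
  have "z$k * (w \<bullet> w) = (z \<bullet> w) * w$k" if "k = 1 \<or> k = 2" for k
    using that o unfolding inner_pt by (auto simp: algebra_simps)
  then have "z$k = t * w$k" if "k = 1 \<or> k = 2" for k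
    unfolding t_def using that w by (simp add: field_simps)
  then have "z = t *\<^sub>R w"
    unfolding pt_eq_iff by simp
  then have "y = (1 - t) *\<^sub>R a + t *\<^sub>R b"
    unfolding z_def w_def by (simp add: algebra_simps)
  then show ?thesis unfolding affine_hull_2 by force
qed

lemma affine_hull_2_eq_orient:
  "a \<noteq> b \<Longrightarrow> affine hull {a, b} = {y. orient a b y = 0}"
  using orient_eq_0_if_in_affine_hull in_affine_hull_if_orient_eq_0 by blast

lemma in_convex_hull_triangleI:
  assumes "0 \<le> s * orient a b y" "0 \<le> s * orient b c y" "0 \<le> s * orient c a y"
    and "0 < s * orient a b c"
  shows "y \<in> convex hull {a, b, c}"
proof -
  define D where "D = s * orient a b c"
  have D_sum: "D = s * orient a b y + s * orient b c y + s * orient c a y"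
    unfolding D_def orient_add_cycle[of a b y c, symmetric] by (simp add: algebra_simps)
  have "D > 0" "s \<noteq> 0" "orient a b c \<noteq> 0" using assms(4) D_def by auto
  define u where "u = s * orient b c y / D"
  define v where "v = s * orient c a y / D"
  define w where "w = s * orient a b y / D"
  \<comment> \<open>Cramer's rule: the barycentric coordinates are ratios of signed areas\<close>
  have "orient b c y * a$k + orient c a y * b$k + orient a b y * c$k = orient a b c * y$k"
    if "k = 1 \<or> k = 2" for k
    using that unfolding orient_def by (auto simp: algebra_simps)
  then have "u * a$k + v * b$k + w * c$k = y$k" if "k = 1 \<or> k = 2" for k
    using that \<open>s \<noteq> 0\<close> \<open>orient a b c \<noteq> 0\<close>
    unfolding u_def v_def w_def D_def by (simp add: field_simps)
  then have "y = u *\<^sub>R a + v *\<^sub>R b + w *\<^sub>R c"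
    unfolding pt_eq_iff by simp
  moreover have "0 \<le> u" "0 \<le> v" "0 \<le> w"
    unfolding u_def v_def w_def using assms \<open>D > 0\<close> by auto
  moreover have "u + v + w = 1"
    unfolding u_def v_def w_def using \<open>D > 0\<close> by (simp add: D_sum add_divide_distrib[symmetric])
  ultimately show ?thesis
    unfolding convex_hull_3 by blast
qed

lemma in_convex_hull_quadrangleI:
  assumes "0 \<le> s * orient a b y" "0 \<le> s * orient b c y" "0 \<le> s * orient c d y"
    and "0 < s * orient d a y"
  shows "y \<in> convex hull {a, b, c, d}"
proof (cases "0 \<le> s * orient a c y")
  case True
  have "s * orient a c d = s * orient a c y + s * orient c d y + s * orient d a y"
    unfolding orient_add_cycle[of a c y d, symmetric] by (simp add: algebra_simps)
  then have "y \<in> convex hull {a, c, d}"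
    using True assms by (intro in_convex_hull_triangleI[of s]) auto
  moreover have "convex hull {a, c, d} \<subseteq> convex hull {a, b, c, d}"
    by (rule hull_mono) auto
  ultimately show ?thesis by blast
next
  case False
  have "s * orient a b c = s * orient a b y + s * orient b c y - s * orient a c y"
    unfolding orient_add_cycle[of a b y c, symmetric] orient_swap[of c a y] by (simp add: algebra_simps)
  then have "y \<in> convex hull {a, b, c}"
    using False assms orient_swap[of c a y] by (intro in_convex_hull_triangleI[of s]) auto
  moreover have "convex hull {a, b, c} \<subseteq> convex hull {a, b, c, d}"
    by (rule hull_mono) auto
  ultimately show ?thesis by blast
qed

lemma infdist_hyperplane:
  fixes n y :: "'a::real_inner"
  assumes "n \<noteq> 0"
  shows "infdist y {z. n \<bullet> z = \<beta>} = \<bar>n \<bullet> y - \<beta>\<bar> / norm n"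
proof (rule antisym)
  define p where "p = y - ((n \<bullet> y - \<beta>) / (n \<bullet> n)) *\<^sub>R n"
  have "n \<bullet> p = \<beta>"
    using assms unfolding p_def by (simp add: inner_diff_right)
  moreover have "dist y p = \<bar>n \<bullet> y - \<beta>\<bar> / norm n"
    using assms unfolding p_def dist_norm by (simp add: power2_norm_eq_inner[symmetric] power2_eq_square)
  ultimately show "infdist y {z. n \<bullet> z = \<beta>} \<le> \<bar>n \<bullet> y - \<beta>\<bar> / norm n"
    using infdist_le[of p "{z. n \<bullet> z = \<beta>}" y] by simp
next
  have "\<bar>n \<bullet> y - \<beta>\<bar> / norm n \<le> dist y z" if "n \<bullet> z = \<beta>" for z
  proof -
    have "\<bar>n \<bullet> y - \<beta>\<bar> = \<bar>n \<bullet> (y - z)\<bar>"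
      using that by (simp add: inner_diff_right)
    also have "\<dots> \<le> norm n * dist y z"
      unfolding dist_norm by (rule Cauchy_Schwarz_ineq2)
    finally show ?thesis
      using assms by (simp add: field_simps)
  qed
  moreover have "{z. n \<bullet> z = \<beta>} \<noteq> {}"
    using assms by (intro exI[of _ "(\<beta> / (n \<bullet> n)) *\<^sub>R n"] ex_in_conv[THEN iffD1]) simp
  ultimately show "\<bar>n \<bullet> y - \<beta>\<bar> / norm n \<le> infdist y {z. n \<bullet> z = \<beta>}"
    unfolding infdist_notempty[OF \<open>_ \<noteq> {}\<close>] by (intro cINF_greatest) auto
qed

lemma infdist_affine_hull_2:
  assumes "a \<noteq> b"
  shows "infdist y (affine hull {a, b}) = \<bar>orient a b y\<bar> / dist a b"
proof -
  have "normal a b \<noteq> 0"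
    using assms normal_eq_0_iff by blast
  moreover have "affine hull {a, b} = {z. normal a b \<bullet> z = normal a b \<bullet> a}"
    unfolding affine_hull_2_eq_orient[OF assms] orient_eq_inner_normal by simp
  ultimately show ?thesis
    by (simp add: infdist_hyperplane orient_eq_inner_normal norm_normal)
qed

lemma exists_inner_gt_if_interior_convex_hull:
  fixes n :: "'a::euclidean_space"
  assumes "x \<in> interior (convex hull S)" "n \<noteq> 0"
  shows "\<exists>s\<in>S. n \<bullet> x < n \<bullet> s"
proof (rule ccontr)
  assume "\<not> ?thesis"
  then have "convex hull S \<subseteq> {u. n \<bullet> u \<le> n \<bullet> x}"
    by (intro hull_minimal) (auto simp: convex_halfspace_le not_less)
  then have "x \<in> interior {u. n \<bullet> u \<le> n \<bullet> x}"
    using assms(1) interior_mono by blast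
  then show False
    using assms(2) by simp
qed

lemma exists_orient_gt_if_interior_convex_hull:
  assumes "x \<in> interior (convex hull S)" "p \<noteq> q" "\<sigma> \<noteq> 0"
  shows "\<exists>s\<in>S. \<sigma> * orient p q x < \<sigma> * orient p q s"
proof -
  have "normal p q \<noteq> 0"
    using assms(2) normal_eq_0_iff by blast
  then obtain s where "s \<in> S" "(\<sigma> *\<^sub>R normal p q) \<bullet> x < (\<sigma> *\<^sub>R normal p q) \<bullet> s"
    using exists_inner_gt_if_interior_convex_hull[OF assms(1), of "\<sigma> *\<^sub>R normal p q"] assms(3)
    by auto
  then show ?thesis
    unfolding orient_eq_inner_normal by (auto simp: algebra_simps)
qed

section \<open>Edges of the convex hull\<close>

lemma orient_proportional_if_inner_eq:
  assumes "a \<noteq> b" "n \<bullet> a = n \<bullet> b"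
  shows "\<exists>k. \<forall>y. n \<bullet> y - n \<bullet> a = k * orient a b y"
proof -
  define w1 where "w1 = b$1 - a$1"
  define w2 where "w2 = b$2 - a$2"
  have w: "w1 * w1 + w2 * w2 \<noteq> 0"
    using assms(1) unfolding w1_def w2_def by (auto simp: pt_eq_iff add_nonneg_eq_0_iff)
  have perp: "n$1 * w1 + n$2 * w2 = 0"
    using assms(2) unfolding w1_def w2_def inner_pt by (simp add: algebra_simps)
  \<comment> \<open>in the plane, n is orthogonal to b - a, hence a multiple of the normal of ab\<close>
  have "(n$2 * w1 - n$1 * w2) * orient a b y = (w1 * w1 + w2 * w2) * (n \<bullet> y - n \<bullet> a)" for y
    using perp unfolding orient_def w1_def w2_def inner_pt by algebra
  then have "n \<bullet> y - n \<bullet> a = (n$2 * w1 - n$1 * w2) / (w1 * w1 + w2 * w2) * orient a b y" for y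
    using w by (simp add: field_simps)
  then show ?thesis by blast
qed

definition strictly_supports :: "real \<Rightarrow> pt \<Rightarrow> pt \<Rightarrow> pt set \<Rightarrow> bool" where
  "strictly_supports \<sigma> a b P \<longleftrightarrow>
     (\<forall>y\<in>P. 0 \<le> \<sigma> * orient a b y \<and> (y \<noteq> a \<and> y \<noteq> b \<longrightarrow> 0 < \<sigma> * orient a b y))"

lemma hull_edge_strictly_supports:
  assumes "finite P" "general_position P" "hull_edge P a b" "a \<in> P" "b \<in> P"
    and "x \<in> P - {a, b}"
  shows "\<exists>\<sigma>\<in>{-1, 1}. strictly_supports \<sigma> a b P"
proof -
  have "a \<noteq> b" "closed_segment a b exposed_face_of convex hull P"
    using assms(1,3) exposed_face_of_polyhedron polyhedron_convex_hull
    unfolding hull_edge_def by auto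
  then obtain n \<beta> where n: "convex hull P \<subseteq> {u. n \<bullet> u \<le> \<beta>}"
    "closed_segment a b = convex hull P \<inter> {u. n \<bullet> u = \<beta>}"
    unfolding exposed_face_of_def by blast
  then have "n \<bullet> a = \<beta>" "n \<bullet> b = \<beta>"
    using ends_in_segment by blast+
  then obtain k where k: "\<And>y. n \<bullet> y - \<beta> = k * orient a b y"
    using orient_proportional_if_inner_eq[OF \<open>a \<noteq> b\<close>] by metis
  have le: "k * orient a b y \<le> 0" if "y \<in> P" for y
    using k[of y] n(1) hull_inc[OF that] by fastforce
  have less: "k * orient a b y < 0" if "y \<in> P" "y \<noteq> a" "y \<noteq> b" for y
  proof -
    have "\<not> collinear {a, b, y}"
      using assms(2,4,5) that \<open>a \<noteq> b\<close> unfolding general_position_def by auto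
    moreover have "{a, b, y} \<subseteq> closed_segment a b" if "y \<in> closed_segment a b"
      using that ends_in_segment by blast
    ultimately have "y \<notin> closed_segment a b"
      using collinear_subset[OF collinear_closed_segment] by blast
    then show ?thesis
      using le[OF that(1)] k[of y] n(2) hull_inc[OF that(1)] by force
  qed
  have "k \<noteq> 0"
    using less assms(6) by force
  then have "strictly_supports (if k > 0 then -1 else 1) a b P"
    unfolding strictly_supports_def using le less
    by (force simp: mult_le_0_iff mult_less_0_iff)
  then show ?thesis by (cases "0 < k") auto
qed

lemma strictly_supports_consecutive:
  assumes "strictly_supports \<sigma> a b P" "strictly_supports \<sigma>' b d P"
    and "\<sigma> \<in> {-1, 1}" "\<sigma>' \<in> {-1, 1}" "a \<in> P" "d \<in> P" "distinct [a, b, d]"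
  shows "\<sigma>' = \<sigma>"
proof -
  have "0 < \<sigma> * orient a b d"
    using assms(1,6,7) unfolding strictly_supports_def by auto
  moreover have "0 < \<sigma>' * orient b d a"
    using assms(2,5,7) unfolding strictly_supports_def by auto
  ultimately show ?thesis
    using assms(3,4) orient_rotate[of a b d] by auto
qed

lemma ch_subset: "ch P \<subseteq> P"
  unfolding ch_def by auto

lemma ch_contains_maximizer:
  assumes "finite P" "P \<noteq> {}" "n \<noteq> 0"
  obtains m where "m \<in> ch P" "\<And>y. y \<in> P \<Longrightarrow> n \<bullet> y \<le> n \<bullet> m"
proof -
  have "Max ((\<bullet>) n ` P) \<in> (\<bullet>) n ` P"
    using assms(1,2) by (intro Max_in) auto
  then obtain m where m: "m \<in> P" "n \<bullet> m = Max ((\<bullet>) n ` P)"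
    by auto
  have max: "n \<bullet> y \<le> n \<bullet> m" if "y \<in> P" for y
    using m(2) assms(1) that by simp
  have "m \<notin> interior (convex hull P)"
    using exists_inner_gt_if_interior_convex_hull[of m P n] assms(3) max by force
  then have "m \<in> ch P"
    using m(1) hull_inc[of m P convex] closure_subset unfolding ch_def frontier_def by blast
  then show ?thesis
    using that max by blast
qed

(* With only two hull points a and b, the point of P farthest from the line ab would be a hull
   point off that line. *)
lemma hull_order_length_ge_3:
  assumes "finite P" "general_position P" "hull_order P c" "x \<in> P - ch P"
  shows "length c \<ge> 3"
proof (rule ccontr)
  assume "\<not> length c \<ge> 3"
  then have "length c = 2"
    using assms(3) unfolding hull_order_def by simp
  then obtain a b where c: "c = [a, b]"
    by (auto simp: length_Suc_conv numeral_2_eq_2)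
  have ab: "ch P = {a, b}" "a \<noteq> b" "hull_edge P a b"
    using assms(3) unfolding c hull_order_def by auto
  moreover have "a \<in> P" "b \<in> P" "x \<in> P - {a, b}"
    using ab(1) ch_subset[of P] assms(4) by auto
  ultimately obtain \<sigma> where \<sigma>: "\<sigma> \<in> {-1, 1}" "strictly_supports \<sigma> a b P"
    using hull_edge_strictly_supports[OF assms(1,2)] by blast
  define n where "n = \<sigma> *\<^sub>R normal a b"
  have "n \<noteq> 0"
    using \<sigma>(1) ab(2) normal_eq_0_iff unfolding n_def by auto
  then obtain m where m: "m \<in> ch P" "\<And>y. y \<in> P \<Longrightarrow> n \<bullet> y \<le> n \<bullet> m"
    using ch_contains_maximizer[OF assms(1)] assms(4) by blast
  have side: "\<sigma> * orient a b y = n \<bullet> y - n \<bullet> a" for y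
    unfolding n_def orient_eq_inner_normal by (simp add: algebra_simps)
  have "\<sigma> * orient a b m = 0"
    using m(1) ab(1) unfolding orient_def by auto
  moreover have "0 < \<sigma> * orient a b x"
    using \<sigma>(2) assms(4) ab(1) unfolding strictly_supports_def by auto
  ultimately show False
    using m(2)[of x] assms(4) unfolding side by simp
qed

lemma hull_order_nth_mem: "hull_order P c \<Longrightarrow> k < length c \<Longrightarrow> c ! k \<in> ch P"
  unfolding hull_order_def by auto

lemma hull_order_edge_sign:
  assumes "finite P" "general_position P" "hull_order P c" "x \<in> P - ch P" "i < length c"
  shows "\<exists>\<sigma>\<in>{-1, 1}. strictly_supports \<sigma> (c ! i) (c ! ((i + 1) mod length c)) P"
proof (rule hull_edge_strictly_supports[OF assms(1,2)])
  have "(i + 1) mod length c < length c"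
    using assms(5) by (intro mod_less_divisor) linarith
  then have "c ! i \<in> ch P" "c ! ((i + 1) mod length c) \<in> ch P"
    using hull_order_nth_mem[OF assms(3)] assms(5) by simp_all
  then show "c ! i \<in> P" "c ! ((i + 1) mod length c) \<in> P"
      "x \<in> P - {c ! i, c ! ((i + 1) mod length c)}"
    using assms(4) ch_subset by auto
  show "hull_edge P (c ! i) (c ! ((i + 1) mod length c))"
    using assms(3,5) unfolding hull_order_def by simp
qed

lemma hull_order_consecutive_distinct:
  assumes "hull_order P c" "length c \<ge> 3" "i + 1 < length c"
  shows "distinct [c ! i, c ! (i + 1), c ! ((i + 1 + 1) mod length c)]"
proof -
  define d where "d = (i + 1 + 1) mod length c"
  have "i + 2 < length c \<or> i + 2 = length c"
    using assms(3) by linarith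
  then have "d = (if i + 2 < length c then i + 2 else 0)"
    unfolding d_def by auto
  then have "d < length c" "d \<noteq> i" "d \<noteq> i + 1"
    using assms(2,3) by auto
  then show ?thesis
    using assms(1,3) nth_eq_iff_index_eq[of c] unfolding d_def[symmetric] hull_order_def by auto
qed

lemma hull_order_orientation:
  assumes "finite P" "general_position P" "hull_order P c" "x \<in> P - ch P"
  shows "\<exists>\<sigma>\<in>{-1, 1}. \<forall>i<length c. strictly_supports \<sigma> (c ! i) (c ! ((i + 1) mod length c)) P"
proof -
  have L: "length c \<ge> 3"
    using hull_order_length_ge_3[OF assms] .
  obtain \<sigma> where \<sigma>: "\<sigma> \<in> {-1, 1}" "strictly_supports \<sigma> (c ! 0) (c ! ((0 + 1) mod length c)) P"
    using hull_order_edge_sign[OF assms, of 0] L by (metis neq0_conv not_numeral_le_zero)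
  have "strictly_supports \<sigma> (c ! i) (c ! ((i + 1) mod length c)) P" if "i < length c" for i
    using that
  proof (induction i)
    case 0
    then show ?case using \<sigma>(2) by simp
  next
    case (Suc i)
    then have IH: "strictly_supports \<sigma> (c ! i) (c ! (i + 1)) P"
      by simp
    obtain \<sigma>' where \<sigma>': "\<sigma>' \<in> {-1, 1}" "strictly_supports \<sigma>' (c ! (i + 1)) (c ! ((i + 1 + 1) mod length c)) P"
      using hull_order_edge_sign[OF assms Suc.prems] by auto
    have "(i + 1 + 1) mod length c < length c"
      using Suc.prems by (intro mod_less_divisor) linarith
    then have "c ! i \<in> P" "c ! ((i + 1 + 1) mod length c) \<in> P"
      using hull_order_nth_mem[OF assms(3)] Suc.prems ch_subset[of P] by auto
    then have "\<sigma>' = \<sigma>"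
      using strictly_supports_consecutive[OF IH \<sigma>'(2) \<sigma>(1) \<sigma>'(1)]
        hull_order_consecutive_distinct[OF assms(3) L, of i] Suc.prems by simp
    then show ?case
      using \<sigma>'(2) by simp
  qed
  then show ?thesis
    using \<sigma>(1) by blast
qed

section \<open>Quadrangle trees\<close>

lemma qtree_on_node_bounds:
  "qtree_on i j S \<Longrightarrow> (a, b, d) \<in> set_tree S \<Longrightarrow> i \<le> a \<and> a \<le> b \<and> b < d \<and> d \<le> j"
  by (induction rule: qtree_on.induct) (auto; fastforce)

lemma qtree_on_subtree:
  "qtree_on i j S \<Longrightarrow> Node l (a, b, d) r \<in> subtrees S \<Longrightarrow> qtree_on a d (Node l (a, b, d) r)"
  by (induction rule: qtree_on.induct) (auto intro: qtree_on.intros)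

lemma set_tree_subtrees_mono: "S \<in> subtrees T \<Longrightarrow> set_tree S \<subseteq> set_tree T"
  by (induction T) auto

lemma anc_pairs_subtrees_mono: "S \<in> subtrees T \<Longrightarrow> anc_pairs S \<subseteq> anc_pairs T"
  by (induction T) auto

definition width :: "nat \<times> nat \<times> nat \<Rightarrow> nat" where
  "width N = (case N of (i, t, j) \<Rightarrow> j - i)"

inductive_cases qtree_on_NodeE: "qtree_on i j (Node l N r)"

lemma qtree_on_descendant_narrower:
  assumes "qtree_on i j (Node l (i, t, j) r)" "N \<in> set_tree l \<union> set_tree r"
  shows "width N < j - i"
proof -
  obtain a b d where N: "N = (a, b, d)"
    by (cases N) auto
  have "i \<le> t" "t < j" "l = Leaf \<or> qtree_on i t l" "r = Leaf \<or> qtree_on (t + 1) j r"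
    using assms(1) by (auto elim: qtree_on_NodeE)
  then show ?thesis
    using assms(2) qtree_on_node_bounds[of i t l a b d] qtree_on_node_bounds[of "t + 1" j r a b d]
    unfolding N width_def by auto
qed

lemma card_predecessors_less:
  assumes "finite A" "transp R" "irreflp R" "v \<in> A" "R v x"
  shows "card {y \<in> A. R y v} < card {y \<in> A. R y x}"
proof (rule psubset_card_mono)
  show "finite {y \<in> A. R y x}"
    using assms(1) by simp
  show "{y \<in> A. R y v} \<subset> {y \<in> A. R y x}"
    using assms(2-5) by (auto dest: transpD irreflpD)
qed

definition descending_rank :: "pt set \<Rightarrow> pt list \<Rightarrow> (nat \<times> nat \<times> nat) tree \<Rightarrow> (pt \<Rightarrow> nat) \<Rightarrow> bool" where
  "descending_rank P c T \<mu> \<longleftrightarrow>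
     (\<forall>x\<in>P - ch P. \<forall>A\<in>P. \<forall>B\<in>P. \<forall>C\<in>P. x \<in> interior (convex hull {A, B, C}) \<longrightarrow>
        (\<exists>v\<in>{A, B, C}. qprec P c T x v \<and> \<mu> v < \<mu> x))"

locale oriented_quadrangle_tree =
  fixes P :: "pt set" and c :: "pt list" and T :: "(nat \<times> nat \<times> nat) tree" and \<sigma> :: real
  assumes finite_P: "finite P"
    and qtree: "quadrangle_tree_for P c T"
    and sign: "\<sigma> \<in> {-1, 1}"
    and supports: "\<And>i. i < length c \<Longrightarrow> strictly_supports \<sigma> (c ! i) (c ! ((i + 1) mod length c)) P"
begin

lemma chain_side:
  assumes "t + 1 < length c" "y \<in> P"
  shows "0 \<le> \<sigma> * orient (c ! t) (c ! (t + 1)) y"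
  using supports[of t] assms unfolding strictly_supports_def by simp

lemma root_side:
  assumes "y \<in> P - ch P"
  shows "0 < \<sigma> * orient (c ! (length c - 1)) (c ! 0) y"
proof -
  have "length c \<ge> 2" "set c = ch P"
    using qtree unfolding quadrangle_tree_for_def hull_order_def by auto
  moreover have "c ! (length c - 1) \<in> set c" "c ! 0 \<in> set c"
    using calculation(1) by (auto intro!: nth_mem)
  moreover have "length c - 1 + 1 = length c"
    using calculation(1) by linarith
  ultimately show ?thesis
    using supports[of "length c - 1"] assms unfolding strictly_supports_def by force
qed

lemma distinct_c: "distinct c"
  using qtree unfolding quadrangle_tree_for_def hull_order_def by simp

lemma qtree_T: "qtree_on 0 (length c - 1) T"
  using qtree unfolding quadrangle_tree_for_def by simp

(* Positive exactly on the side of the rooted edge c_i c_j on which the quadrangle of the node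
   lies. *)
definition elevation :: "nat \<times> nat \<times> nat \<Rightarrow> pt \<Rightarrow> real" where
  "elevation N y = (case N of (i, t, j) \<Rightarrow> \<sigma> * orient (c ! j) (c ! i) y)"

lemma population_cover:
  assumes "qtree_on i j S" "j < length c" "y \<in> P" "0 < \<sigma> * orient (c ! j) (c ! i) y"
  shows "\<exists>N\<in>set_tree S. y \<in> population P c N \<and> 0 < elevation N y"
  using assms
proof (induction rule: qtree_on.induct)
  case (1 i t j l r)
  consider (left) "t \<noteq> i" "0 < \<sigma> * orient (c ! t) (c ! i) y"
    | (right) "t + 1 \<noteq> j" "0 < \<sigma> * orient (c ! j) (c ! (t + 1)) y"
    | (here) "0 \<le> \<sigma> * orient (c ! i) (c ! t) y" "0 \<le> \<sigma> * orient (c ! (t + 1)) (c ! j) y"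
    using orient_swap_sign[of \<sigma> "c ! i" "c ! t" y] orient_swap_sign[of \<sigma> "c ! (t + 1)" "c ! j" y]
    by fastforce
  then show ?case
  proof cases
    case left
    then show ?thesis using "1.IH"(1) "1.hyps"(2) "1.prems" by auto
  next
    case right
    then show ?thesis using "1.IH"(2) "1.prems" by auto
  next
    case here
    have "y \<in> quad c (i, t, j)"
      unfolding quad_def using here "1.prems" "1.hyps"(2) chain_side[of t y]
      by (simp add: in_convex_hull_quadrangleI)
    moreover have "y \<notin> rline c (i, t, j)"
      using "1.prems"(3) orient_eq_0_if_in_affine_hull[of y "c ! i" "c ! j"] orient_swap[of "c ! j"]
      unfolding rline_def by auto
    ultimately show ?thesis
      using "1.prems" unfolding population_def elevation_def by force
  qed
qed

lemma node_in_range: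
  assumes "(i, t, j) \<in> set_tree T"
  shows "i < j" "j < length c" "c ! i \<noteq> c ! j"
proof -
  show "i < j" "j < length c"
    using qtree_on_node_bounds[OF qtree_T assms] by auto
  then show "c ! i \<noteq> c ! j"
    using distinct_c by (simp add: nth_eq_iff_index_eq)
qed

(* A point may lie in the populations of several nodes, so the order of the quadrangle tree
   can have cycles.  Ranking points first by the narrowest node above whose rooted edge they
   lie, then by their elevation there, gives an acyclic order that every descent step decreases. *)
definition anchors :: "pt \<Rightarrow> (nat \<times> nat \<times> nat) set" where
  "anchors x = {N \<in> set_tree T. x \<in> population P c N \<and> 0 < elevation N x}"

definition anchor_width :: "pt \<Rightarrow> nat" where
  "anchor_width x = Min (width ` anchors x)"

definition anchor_elevation :: "pt \<Rightarrow> real" where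
  "anchor_elevation x = Max ((\<lambda>N. elevation N x) ` {N \<in> anchors x. width N = anchor_width x})"

definition rank_less :: "pt \<Rightarrow> pt \<Rightarrow> bool" where
  "rank_less v x \<longleftrightarrow> anchor_width v < anchor_width x \<or>
     (anchor_width v = anchor_width x \<and> anchor_elevation x < anchor_elevation v)"

lemma finite_anchors: "finite (anchors x)"
  unfolding anchors_def by simp

lemma anchor_width_le: "N \<in> anchors x \<Longrightarrow> anchor_width x \<le> width N"
  unfolding anchor_width_def using finite_anchors by simp

lemma anchor_elevation_ge:
  "N \<in> anchors x \<Longrightarrow> width N = anchor_width x \<Longrightarrow> elevation N x \<le> anchor_elevation x"
  unfolding anchor_elevation_def using finite_anchors by (intro Max_ge) auto

lemma canonical_anchor:
  assumes "x \<in> P - ch P"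
  obtains N where "N \<in> anchors x" "width N = anchor_width x" "elevation N x = anchor_elevation x"
proof -
  have "length c \<ge> 2"
    using qtree unfolding quadrangle_tree_for_def hull_order_def by simp
  then have "length c - 1 < length c"
    by simp
  then obtain N where "N \<in> set_tree T" "x \<in> population P c N" "0 < elevation N x"
    using population_cover[OF qtree_T _ _ root_side[OF assms]] assms by blast
  then have "anchors x \<noteq> {}"
    unfolding anchors_def by blast
  then have "anchor_width x \<in> width ` anchors x"
    unfolding anchor_width_def using finite_anchors by simp
  then obtain N0 where "N0 \<in> anchors x" "anchor_width x = width N0"
    by (rule imageE)
  then have "N0 \<in> {N \<in> anchors x. width N = anchor_width x}"
    by simp
  then have "{N \<in> anchors x. width N = anchor_width x} \<noteq> {}"
    by (rule ex_in_conv[THEN iffD1, OF exI])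
  then have "anchor_elevation x \<in> (\<lambda>N. elevation N x) ` {N \<in> anchors x. width N = anchor_width x}"
    unfolding anchor_elevation_def using finite_anchors by (intro Max_in) auto
  then show ?thesis
    using that by auto
qed

lemma infdist_rline_less:
  assumes "N \<in> set_tree T" "0 < elevation N x" "elevation N x < elevation N v"
  shows "infdist x (rline c N) < infdist v (rline c N)"
proof -
  obtain i t j where N: "N = (i, t, j)"
    by (cases N) auto
  have ne: "c ! i \<noteq> c ! j"
    using node_in_range assms(1) unfolding N by blast
  have "\<bar>orient (c ! i) (c ! j) y\<bar> = elevation N y" if "0 < elevation N y" for y
    using that sign orient_swap[of "c ! j" "c ! i" y] unfolding N elevation_def by auto
  then have "infdist y (rline c N) = elevation N y / dist (c ! i) (c ! j)" if "0 < elevation N y" for y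
    using that by (simp add: N rline_def infdist_affine_hull_2[OF ne])
  then show ?thesis
    using assms(2,3) ne by (simp add: divide_strict_right_mono)
qed

lemma descent_via_anchor:
  assumes N: "N \<in> anchors x" "width N = anchor_width x" "elevation N x = anchor_elevation x"
    and v: "v \<in> P" "elevation N x < elevation N v"
  shows "qprec P c T x v \<and> rank_less v x"
proof -
  obtain i t j where ijt: "N = (i, t, j)"
    by (cases N) auto
  have NT: "N \<in> set_tree T" "x \<in> population P c N" "0 < elevation N x"
    using N(1) unfolding anchors_def by auto
  obtain l r where sub: "Node l N r \<in> subtrees T"
    using set_treeE[OF NT(1)] by blast
  have q: "qtree_on i j (Node l N r)"
    using qtree_on_subtree[OF qtree_T sub[unfolded ijt]] unfolding ijt .
  have "0 < \<sigma> * orient (c ! j) (c ! i) v"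
    using NT(3) v(2) unfolding ijt elevation_def by simp
  then obtain N' where N': "N' \<in> set_tree (Node l N r)" "v \<in> population P c N'" "0 < elevation N' v"
    using population_cover[OF q node_in_range(2)[OF NT(1)[unfolded ijt]] v(1)] unfolding ijt by blast
  have N'T: "N' \<in> set_tree T"
    using N'(1) set_tree_subtrees_mono[OF sub] by blast
  then have width_v: "anchor_width v \<le> width N'"
    using N' by (intro anchor_width_le) (simp add: anchors_def)
  show ?thesis
  proof (cases "N' = N")
    case True
    have "qprec P c T x v"
      unfolding qprec_def using NT N'T N'(2) True infdist_rline_less[OF NT(1,3) v(2)] by blast
    moreover have "anchor_elevation x < anchor_elevation v" if "anchor_width v = anchor_width x"
      using anchor_elevation_ge[of N v] N'T N' True N(2,3) v(2) that
      unfolding anchors_def by fastforce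
    ultimately show ?thesis
      using width_v True N(2) unfolding rank_less_def by fastforce
  next
    case False
    then have "N' \<in> set_tree l \<union> set_tree r"
      using N'(1) by simp
    then have "(N, N') \<in> anc_pairs T" "width N' < width N"
      using anc_pairs_subtrees_mono[OF sub] qtree_on_descendant_narrower[OF q[unfolded ijt]]
      unfolding ijt width_def by auto
    then show ?thesis
      using NT N'T N'(2) width_v N(2) unfolding qprec_def rank_less_def by auto
  qed
qed

lemma exists_descent:
  assumes "x \<in> P - ch P" "x \<in> interior (convex hull {A, B, C})" "A \<in> P" "B \<in> P" "C \<in> P"
  shows "\<exists>v\<in>{A, B, C}. qprec P c T x v \<and> rank_less v x"
proof -
  obtain N where N: "N \<in> anchors x" "width N = anchor_width x" "elevation N x = anchor_elevation x"
    using canonical_anchor[OF assms(1)] by blast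
  obtain i t j where ijt: "N = (i, t, j)"
    by (cases N) auto
  have "c ! j \<noteq> c ! i" "\<sigma> \<noteq> 0"
    using node_in_range[of i t j] N(1) sign unfolding ijt anchors_def by auto
  then obtain v where v: "v \<in> {A, B, C}" "\<sigma> * orient (c ! j) (c ! i) x < \<sigma> * orient (c ! j) (c ! i) v"
    using exists_orient_gt_if_interior_convex_hull[OF assms(2)] by blast
  have "v \<in> P"
    using v(1) assms(3-5) by blast
  moreover have "elevation N x < elevation N v"
    using v(2) unfolding ijt elevation_def by simp
  ultimately have "qprec P c T x v \<and> rank_less v x"
    by (rule descent_via_anchor[OF N])
  then show ?thesis
    using v(1) by blast
qed

lemma transp_rank_less: "transp rank_less"
  by (rule transpI) (auto simp: rank_less_def)

lemma irreflp_rank_less: "irreflp rank_less"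
  by (rule irreflpI) (simp add: rank_less_def)

lemma descending_rank: "descending_rank P c T (\<lambda>x. card {y \<in> P. rank_less y x})"
  unfolding descending_rank_def
proof (intro ballI impI)
  fix x A B C
  assume "x \<in> P - ch P" "A \<in> P" "B \<in> P" "C \<in> P" "x \<in> interior (convex hull {A, B, C})"
  then obtain v where "v \<in> {A, B, C}" "qprec P c T x v" "rank_less v x"
    using exists_descent by blast
  moreover have "v \<in> P"
    using calculation(1) \<open>A \<in> P\<close> \<open>B \<in> P\<close> \<open>C \<in> P\<close> by blast
  ultimately show "\<exists>v\<in>{A, B, C}. qprec P c T x v \<and>
      card {y \<in> P. rank_less y v} < card {y \<in> P. rank_less y x}"
    using card_predecessors_less[OF finite_P transp_rank_less irreflp_rank_less] by blast
qed

end

lemma exists_descending_rank: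
  assumes "finite P" "general_position P" "quadrangle_tree_for P c T"
  shows "\<exists>\<mu>. descending_rank P c T \<mu>"
proof (cases "P - ch P = {}")
  case True
  then show ?thesis
    unfolding descending_rank_def by blast
next
  case False
  then obtain x where "x \<in> P - ch P"
    by blast
  moreover have "hull_order P c"
    using assms(3) unfolding quadrangle_tree_for_def by simp
  ultimately obtain \<sigma> where "\<sigma> \<in> {-1, 1}"
    "\<forall>i<length c. strictly_supports \<sigma> (c ! i) (c ! ((i + 1) mod length c)) P"
    using hull_order_orientation[OF assms(1,2)] by blast
  then interpret oriented_quadrangle_tree P c T \<sigma>
    using assms by unfold_locales auto
  show ?thesis
    using descending_rank by blast
qed

section \<open>Encoding arrays by ordered downdrafts\<close>

lemma eq_if_card_less_eq:
  fixes a b :: "'a::linorder"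
  assumes "finite S" "a \<in> S" "b \<in> S" "card {s \<in> S. s < a} = card {s \<in> S. s < b}"
  shows "a = b"
proof (rule ccontr)
  have less: "card {s \<in> S. s < a} < card {s \<in> S. s < b}" if "a < b" "a \<in> S" for a b
    using that assms(1) by (intro psubset_card_mono) auto
  assume "a \<noteq> b"
  then show False
    using less[of a b] less[of b a] assms(2-4) by (cases a b rule: linorder_cases) auto
qed

lemma bij_betw_order_iso_eq:
  fixes f g :: "'a \<Rightarrow> 'b::linorder"
  assumes "finite S" "bij_betw f F S" "bij_betw g F S"
    and "\<And>x y. x \<in> F \<Longrightarrow> y \<in> F \<Longrightarrow> f x \<le> f y \<longleftrightarrow> g x \<le> g y"
    and "x \<in> F"
  shows "f x = g x"
proof -
  have rank: "card {s \<in> S. s < h x} = card {y \<in> F. h y < h x}" if "bij_betw h F S" for h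
  proof -
    have "bij_betw h {y \<in> F. h y < h x} {s \<in> S. s < h x}"
      by (rule bij_betw_subset[OF that]) (use that in \<open>auto simp: bij_betw_def\<close>)
    then show ?thesis
      by (simp add: bij_betw_same_card)
  qed
  have "{y \<in> F. f y < f x} = {y \<in> F. g y < g x}"
    using assms(4,5) by (auto simp: not_le[symmetric])
  then have "card {s \<in> S. s < f x} = card {s \<in> S. s < g x}"
    unfolding rank[OF assms(2)] rank[OF assms(3)] by simp
  moreover have "f x \<in> S" "g x \<in> S"
    using assms(2,3,5) by (auto simp: bij_betw_apply)
  ultimately show ?thesis
    using eq_if_card_less_eq[OF assms(1)] by blast
qed

lemma linear_order_on_pullback:
  fixes f :: "'a \<Rightarrow> 'b::linorder"
  assumes "inj_on f F"
  shows "linear_order_on F {(x, x'). x \<in> F \<and> x' \<in> F \<and> f x \<le> f x'}"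
  using assms
  unfolding linear_order_on_def partial_order_on_def preorder_on_def refl_on_def trans_def
    antisym_def total_on_def inj_on_def
  by (auto intro: order_antisym)

lemma finite_OD: "finite P \<Longrightarrow> finite (OD P c T)"
proof -
  assume "finite P"
  have "OD P c T \<subseteq> ((P - ch P) \<rightarrow>\<^sub>E P) \<times> (P \<rightarrow>\<^sub>E Pow (P \<times> P))"
    unfolding OD_def downdrafts_def fiber_def by (force simp: PiE_iff)
  moreover have "finite (((P - ch P) \<rightarrow>\<^sub>E P) \<times> (P \<rightarrow>\<^sub>E Pow (P \<times> P)))"
    using \<open>finite P\<close> by (intro finite_cartesian_product finite_PiE) auto
  ultimately show ?thesis
    by (rule finite_subset)
qed

definition triple_nth :: "nat \<Rightarrow> int \<times> int \<times> int \<Rightarrow> int" where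
  "triple_nth d w = (case w of (a, b, e) \<Rightarrow> if d = 0 then a else if d = 1 then b else e)"

locale witness_encoding =
  fixes P :: "pt set" and c :: "pt list" and T :: "(nat \<times> nat \<times> nat) tree"
    and \<mu> :: "pt \<Rightarrow> nat" and W :: "nat \<Rightarrow> int \<times> int \<times> int"
  assumes finite_P: "finite P"
    and descending: "descending_rank P c T \<mu>"
begin

definition index :: "(nat \<Rightarrow> pt) \<Rightarrow> pt \<Rightarrow> nat" where
  "index I = the_inv_into {1..card P} I"

definition vertex :: "(nat \<Rightarrow> pt) \<Rightarrow> nat \<Rightarrow> nat \<Rightarrow> pt" where
  "vertex I i d = I (nat (triple_nth d (W i)))"

definition descent_digit :: "(nat \<Rightarrow> pt) \<Rightarrow> nat \<Rightarrow> nat" where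
  "descent_digit I i =
     (SOME d. d < 3 \<and> qprec P c T (I i) (vertex I i d) \<and> \<mu> (vertex I i d) < \<mu> (I i))"

definition downdraft_of :: "(nat \<Rightarrow> pt) \<Rightarrow> pt \<Rightarrow> pt" where
  "downdraft_of I = restrict (\<lambda>x. vertex I (index I x) (descent_digit I (index I x))) (P - ch P)"

definition fiber_order_of :: "(nat \<Rightarrow> pt) \<Rightarrow> pt \<Rightarrow> pt rel" where
  "fiber_order_of I = restrict (\<lambda>y. {(x, x'). x \<in> fiber P (downdraft_of I) y \<and>
     x' \<in> fiber P (downdraft_of I) y \<and> index I x \<le> index I x'}) P"

definition digits_of :: "(nat \<Rightarrow> pt) \<Rightarrow> nat \<Rightarrow> nat" where
  "digits_of I = restrict (\<lambda>i. if I i \<in> ch P then 0 else descent_digit I i) {1..card P}"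

definition encode ::
  "(nat \<Rightarrow> pt) \<Rightarrow> ((pt \<Rightarrow> pt) \<times> (pt \<Rightarrow> pt rel)) \<times> (nat \<Rightarrow> nat) \<times> (pt \<Rightarrow> nat)" where
  "encode I = ((downdraft_of I, fiber_order_of I), digits_of I, restrict (index I) (ch P))"

lemma index_inverse:
  assumes "I \<in> V P W"
  shows "\<And>x. x \<in> P \<Longrightarrow> index I x \<in> {1..card P} \<and> I (index I x) = x"
    and "\<And>i. i \<in> {1..card P} \<Longrightarrow> I i \<in> P \<and> index I (I i) = i"
proof -
  have "bij_betw I {1..card P} P"
    using assms unfolding V_def arrays_def by simp
  then have inj: "inj_on I {1..card P}" and im: "I ` {1..card P} = P"
    unfolding bij_betw_def by auto
  show "index I x \<in> {1..card P} \<and> I (index I x) = x" if "x \<in> P" for x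
  proof -
    have "x \<in> I ` {1..card P}"
      using that im by simp
    then show ?thesis
      unfolding index_def using the_inv_into_into[OF inj _ subset_refl] f_the_inv_into_f[OF inj]
      by blast
  qed
  show "I i \<in> P \<and> index I (I i) = i" if "i \<in> {1..card P}" for i
    using that the_inv_into_f_f[OF inj] im unfolding index_def by blast
qed

lemma inj_on_index: "I \<in> V P W \<Longrightarrow> inj_on (index I) P"
  by (rule inj_on_inverseI[where g = I]) (use index_inverse in auto)

lemma witness_entry:
  assumes "I \<in> V P W" "i \<in> {1..card P}"
  shows "I i \<in> ch P \<longleftrightarrow> fst (W i) = -1"
    and "I i \<notin> ch P \<Longrightarrow> d < 3 \<Longrightarrow> nat (triple_nth d (W i)) \<in> {1..card P}
           \<and> int (nat (triple_nth d (W i))) = triple_nth d (W i)"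
    and "I i \<notin> ch P \<Longrightarrow> I i \<in> interior (convex hull {vertex I i 0, vertex I i 1, vertex I i 2})"
proof -
  obtain a b e where We: "W i = (a, b, e)"
    by (cases "W i") auto
  have "if I i \<in> ch P then a = -1 \<and> b = -1 \<and> e = -1
        else a \<in> {1..int (card P)} \<and> b \<in> {1..int (card P)} \<and> e \<in> {1..int (card P)} \<and>
             I i \<in> interior (convex hull {I (nat a), I (nat b), I (nat e)})"
    using assms We unfolding V_def is_witness_list_def by fastforce
  then show "I i \<in> ch P \<longleftrightarrow> fst (W i) = -1"
    and "I i \<notin> ch P \<Longrightarrow> d < 3 \<Longrightarrow> nat (triple_nth d (W i)) \<in> {1..card P}
           \<and> int (nat (triple_nth d (W i))) = triple_nth d (W i)"
    and "I i \<notin> ch P \<Longrightarrow> I i \<in> interior (convex hull {vertex I i 0, vertex I i 1, vertex I i 2})"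
    using We unfolding vertex_def triple_nth_def by (auto split: if_splits)
qed

lemma descent_digit_spec:
  assumes "I \<in> V P W" "i \<in> {1..card P}" "I i \<notin> ch P"
  defines "d \<equiv> descent_digit I i"
  shows "d < 3" "vertex I i d \<in> P" "index I (vertex I i d) = nat (triple_nth d (W i))"
    "qprec P c T (I i) (vertex I i d)" "\<mu> (vertex I i d) < \<mu> (I i)"
proof -
  have vertex_in: "vertex I i d' \<in> P" "index I (vertex I i d') = nat (triple_nth d' (W i))"
    if "d' < 3" for d'
    using index_inverse(2)[OF assms(1)] witness_entry(2)[OF assms(1-3) that] unfolding vertex_def
    by auto
  have "I i \<in> P - ch P"
    using index_inverse(2)[OF assms(1,2)] assms(3) by simp
  then have "\<exists>v\<in>{vertex I i 0, vertex I i 1, vertex I i 2}. qprec P c T (I i) v \<and> \<mu> v < \<mu> (I i)"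
    using descending witness_entry(3)[OF assms(1-3)] vertex_in(1)[of 0] vertex_in(1)[of 1]
      vertex_in(1)[of 2]
    unfolding descending_rank_def by simp
  then have "\<exists>d'. d' < 3 \<and> qprec P c T (I i) (vertex I i d') \<and> \<mu> (vertex I i d') < \<mu> (I i)"
    by (auto intro: exI[of _ "0::nat"] exI[of _ "1::nat"] exI[of _ "2::nat"])
  then have "d < 3 \<and> qprec P c T (I i) (vertex I i d) \<and> \<mu> (vertex I i d) < \<mu> (I i)"
    unfolding d_def descent_digit_def by (rule someI_ex)
  then show "d < 3" "qprec P c T (I i) (vertex I i d)" "\<mu> (vertex I i d) < \<mu> (I i)"
    "vertex I i d \<in> P" "index I (vertex I i d) = nat (triple_nth d (W i))"
    using vertex_in by auto
qed

definition fiber_indices :: "(nat \<Rightarrow> pt) \<Rightarrow> pt \<Rightarrow> nat set" where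
  "fiber_indices I y =
     {i \<in> {1..card P}. fst (W i) \<noteq> -1 \<and> triple_nth (digits_of I i) (W i) = int (index I y)}"

lemma downdraft_of_descends:
  assumes "I \<in> V P W" "x \<in> P - ch P"
  shows "downdraft_of I x \<in> P" "qprec P c T x (downdraft_of I x)" "\<mu> (downdraft_of I x) < \<mu> x"
  using descent_digit_spec[OF assms(1), of "index I x"] index_inverse(1)[OF assms(1), of x] assms(2)
  unfolding downdraft_of_def by auto

lemma fiber_iff_index:
  assumes "K \<in> V P W" "y \<in> P"
  shows "x \<in> fiber P (downdraft_of K) y \<longleftrightarrow> x \<in> P \<and> index K x \<in> fiber_indices K y"
proof (cases "x \<in> P")
  case True
  define i where "i = index K x"
  have i: "i \<in> {1..card P}" "K i = x"
    using index_inverse(1)[OF assms(1) True] unfolding i_def by auto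
  have "downdraft_of K x = y \<longleftrightarrow> triple_nth (descent_digit K i) (W i) = int (index K y)"
    if "x \<notin> ch P"
  proof -
    define d where "d = descent_digit K i"
    have "downdraft_of K x = vertex K i d"
      using True that unfolding downdraft_of_def d_def i_def by simp
    moreover have "vertex K i d \<in> P" "index K (vertex K i d) = nat (triple_nth d (W i))"
      "int (nat (triple_nth d (W i))) = triple_nth d (W i)"
      using descent_digit_spec[OF assms(1) i(1)] witness_entry(2)[OF assms(1) i(1)] that i(2)
      unfolding d_def by auto
    ultimately show ?thesis
      using inj_on_index[OF assms(1)] assms(2) unfolding d_def[symmetric] inj_on_def by force
  qed
  then show ?thesis
    using True i witness_entry(1)[OF assms(1) i(1)]
    unfolding fiber_def fiber_indices_def digits_of_def i_def by auto
qed (simp add: fiber_def)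

lemma bij_betw_index_fiber:
  assumes "K \<in> V P W" "y \<in> P"
  shows "bij_betw (index K) (fiber P (downdraft_of K) y) (fiber_indices K y)"
  unfolding bij_betw_def
proof
  show "inj_on (index K) (fiber P (downdraft_of K) y)"
    using inj_on_index[OF assms(1)] by (rule inj_on_subset) (auto simp: fiber_def)
  have "i \<in> index K ` fiber P (downdraft_of K) y" if "i \<in> fiber_indices K y" for i
  proof -
    have "K i \<in> P" "index K (K i) = i"
      using index_inverse(2)[OF assms(1)] that unfolding fiber_indices_def by auto
    then show ?thesis
      using that fiber_iff_index[OF assms, of "K i"] by force
  qed
  then show "index K ` fiber P (downdraft_of K) y = fiber_indices K y"
    using fiber_iff_index[OF assms] by blast
qed

lemma encode_in:
  assumes "K \<in> V P W"
  shows "encode K \<in> OD P c T \<times> ({1..card P} \<rightarrow>\<^sub>E {..<3}) \<times> (ch P \<rightarrow>\<^sub>E {1..card P})"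
proof -
  have "downdraft_of K \<in> downdrafts P c T"
    using downdraft_of_descends[OF assms] unfolding downdrafts_def downdraft_of_def[of K] by auto
  moreover have "inj_on (index K) (fiber P (downdraft_of K) y)" if "y \<in> P" for y
    using bij_betw_index_fiber[OF assms that] by (rule bij_betw_imp_inj_on)
  then have "fiber_order_of K \<in> (\<Pi>\<^sub>E y\<in>P. {r. r \<subseteq> fiber P (downdraft_of K) y \<times> fiber P (downdraft_of K) y
      \<and> linear_order_on (fiber P (downdraft_of K) y) r})"
    unfolding fiber_order_of_def using linear_order_on_pullback by auto
  moreover have "digits_of K \<in> {1..card P} \<rightarrow>\<^sub>E {..<3}"
    using descent_digit_spec(1)[OF assms] unfolding digits_of_def by auto
  moreover have "restrict (index K) (ch P) \<in> ch P \<rightarrow>\<^sub>E {1..card P}"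
    using index_inverse(1)[OF assms] ch_subset[of P] by (simp add: subset_iff)
  ultimately show ?thesis
    unfolding encode_def OD_def by simp
qed

lemma index_eq_if_encode_eq:
  assumes I: "I \<in> V P W" and J: "J \<in> V P W" and eq: "encode I = encode J"
  shows "x \<in> P \<Longrightarrow> index I x = index J x"
proof (induction x rule: measure_induct_rule[where f = \<mu>])
  case (less x)
  have same: "downdraft_of I = downdraft_of J" "fiber_order_of I = fiber_order_of J"
    "digits_of I = digits_of J" "restrict (index I) (ch P) = restrict (index J) (ch P)"
    using eq unfolding encode_def by auto
  show ?case
  proof (cases "x \<in> ch P")
    case True
    then show ?thesis
      using same(4) by (metis restrict_apply')
  next
    case False
    define y where "y = downdraft_of I x"
    define F where "F = fiber P (downdraft_of I) y"
    have y: "y \<in> P" "\<mu> y < \<mu> x"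
      using downdraft_of_descends[OF I] less.prems False unfolding y_def by auto
    then have "fiber_indices I y = fiber_indices J y"
      using less.IH same(3) unfolding fiber_indices_def by simp
    then have "bij_betw (index I) F (fiber_indices I y)" "bij_betw (index J) F (fiber_indices I y)"
      using bij_betw_index_fiber[OF I y(1)] bij_betw_index_fiber[OF J y(1)]
      unfolding F_def same(1) by simp_all
    moreover have "index I x' \<le> index I x'' \<longleftrightarrow> index J x' \<le> index J x''"
      if "x' \<in> F" "x'' \<in> F" for x' x''
      using fun_cong[OF same(2), of y] that y(1) unfolding fiber_order_of_def F_def same(1)
      by (auto dest: equalityD1 equalityD2 simp: subset_iff)
    moreover have "x \<in> F"
      using less.prems False unfolding F_def y_def fiber_def by simp
    ultimately show ?thesis
      by (intro bij_betw_order_iso_eq[where S = "fiber_indices I y"]) (auto simp: fiber_indices_def)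
  qed
qed

lemma inj_on_encode: "inj_on encode (V P W)"
proof
  fix I J
  assume I: "I \<in> V P W" and J: "J \<in> V P W" and eq: "encode I = encode J"
  show "I = J"
  proof
    fix i
    show "I i = J i"
    proof (cases "i \<in> {1..card P}")
      case True
      then have "I i \<in> P" "index I (I i) = i"
        using index_inverse(2)[OF I] by auto
      then have "index J (I i) = i"
        using index_eq_if_encode_eq[OF I J eq, of "I i"] by simp
      moreover have "J (index J (I i)) = I i"
        using index_inverse(1)[OF J] \<open>I i \<in> P\<close> by blast
      ultimately show ?thesis
        by simp
    next
      case False
      have "I \<in> {1..card P} \<rightarrow>\<^sub>E P" "J \<in> {1..card P} \<rightarrow>\<^sub>E P"
        using I J unfolding V_def arrays_def by auto
      then show ?thesis
        using PiE_arb[OF _ False] by metis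
    qed
  qed
qed

lemma card_V_le: "card (V P W) \<le> card (OD P c T) * 3 ^ card P * card P ^ card (ch P)"
proof -
  define S where "S = OD P c T \<times> ({1..card P} \<rightarrow>\<^sub>E {..<3::nat}) \<times> (ch P \<rightarrow>\<^sub>E {1..card P})"
  have "finite (ch P)"
    using finite_P ch_subset by (rule finite_subset[rotated])
  then have "finite S" "card S = card (OD P c T) * 3 ^ card P * card P ^ card (ch P)"
    unfolding S_def using finite_OD[OF finite_P]
    by (simp_all add: card_cartesian_product card_PiE finite_PiE)
  moreover have "encode ` V P W \<subseteq> S"
    using encode_in unfolding S_def by blast
  ultimately show ?thesis
    using card_inj_on_le[OF inj_on_encode] by metis
qed

end

lemma Vmax_le:
  assumes "\<And>W. card (V P W) \<le> B"
  shows "Vmax P \<le> B"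
proof -
  have "restrict (\<lambda>_. (0, 0, 0)) {1..card P} \<in> witness_lists (card P)"
    unfolding witness_lists_def by simp
  moreover have "(\<lambda>W. card (V P W)) ` witness_lists (card P) \<subseteq> {..B}"
    using assms by auto
  ultimately show ?thesis
    unfolding Vmax_def using assms by (intro Max.boundedI) (auto dest: finite_subset)
qed

theorem corollary5p4:
  fixes P :: "pt set" and c :: "pt list" and T :: "(nat \<times> nat \<times> nat) tree"
  assumes "finite P"
    and "general_position P"
    and "quadrangle_tree_for P c T"
  shows "Vmax P \<le> card (OD P c T) * 3 ^ card P * card P ^ card (ch P)"
proof (rule Vmax_le)
  fix W
  obtain \<mu> where "descending_rank P c T \<mu>"
    using exists_descending_rank[OF assms] by blast
  then interpret witness_encoding P c T \<mu> W
    using assms(1) by unfold_locales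
  show "card (V P W) \<le> card (OD P c T) * 3 ^ card P * card P ^ card (ch P)"
    by (rule card_V_le)
qed

end
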